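(* Let $x_1,\ldots,x_m,y_1,\ldots,y_n$ be elements of a nilpotent group $\Gamma$, regarded as $m+n$ distinct letters. Then there is a finite list $\eta_1,\ldots,\eta_r$ of formal commutators in the $x_i$ and $y_j$ such that: (i) in $\Gamma$, $[x_1\cdots x_m,y_1\cdots y_n]=\eta_1\cdots\eta_r$; (ii) for each pair $(i,i')$ some $\eta_j$ equals $[x_i,y_{i'}]$; (iii) every $\eta_j$ has at least one $x_i$ and at least one $y_{i'}$ among its arguments; (iv) the $\eta_j$ are pairwise distinct as formal commutators in the $x_i,y_{i'}$; (v) no $\eta_j$ has a component of the form $[x_i,x_{i'}]$ or $[y_i,y_{i'}]$; (vi) if $\eta_j$ is not of the form $[x_i,y_{i'}]$ then $\eta_j$ has total weight greater than 2.
   Context: $[u,v]=u^{-1}v^{-1}uv$. Formal commutators in letters: each letter is one, and $[\beta,\beta']$ is one whenever $\beta,\beta'$ are; they are interpreted in the group in the obvious way. The arguments of a formal commutator are the letters occurring in it; its total weight is the number of letter occurrences. Components: $C(x)=\{x\}$ for a letter and $C([\beta,\beta'])=C(\beta)\cup C(\beta')\cup\{[\beta,\beta']\}$. *)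

theory Defs
  imports "HOL-Algebra.Algebra"
begin

definition gcomm :: "('a, 'b) monoid_scheme \<Rightarrow> 'a \<Rightarrow> 'a \<Rightarrow> 'a" where
  "gcomm G u v = inv\<^bsub>G\<^esub> u \<otimes>\<^bsub>G\<^esub> inv\<^bsub>G\<^esub> v \<otimes>\<^bsub>G\<^esub> u \<otimes>\<^bsub>G\<^esub> v"

text \<open>Lower central series: gamma_1 = G, gamma_(k+1) = [G, gamma_k].\<close>
fun lower_central :: "('a, 'b) monoid_scheme \<Rightarrow> nat \<Rightarrow> 'a set" where
  "lower_central G 0 = carrier G"
| "lower_central G (Suc k) =
     generate G {gcomm G g h | g h. g \<in> carrier G \<and> h \<in> lower_central G k}"

definition nilpotent_group :: "('a, 'b) monoid_scheme \<Rightarrow> bool" where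
  "nilpotent_group G \<longleftrightarrow> group G \<and> (\<exists>c. lower_central G c = {\<one>\<^bsub>G\<^esub>})"

definition glist_prod :: "('a, 'b) monoid_scheme \<Rightarrow> 'a list \<Rightarrow> 'a" where
  "glist_prod G xs = foldr (\<lambda>a b. a \<otimes>\<^bsub>G\<^esub> b) xs \<one>\<^bsub>G\<^esub>"

text \<open>Letters: XL i stands for x_i, YL j for y_j (0-based indices).\<close>
datatype letter = XL nat | YL nat

datatype 'l fcomm = Ltr 'l | Comm "'l fcomm" "'l fcomm"

fun fc_args :: "'l fcomm \<Rightarrow> 'l set" where
  "fc_args (Ltr a) = {a}"
| "fc_args (Comm b c) = fc_args b \<union> fc_args c"

fun fc_weight :: "'l fcomm \<Rightarrow> nat" where
  "fc_weight (Ltr a) = 1"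
| "fc_weight (Comm b c) = fc_weight b + fc_weight c"

fun fc_components :: "'l fcomm \<Rightarrow> 'l fcomm set" where
  "fc_components (Ltr a) = {Ltr a}"
| "fc_components (Comm b c) = fc_components b \<union> fc_components c \<union> {Comm b c}"

fun fc_eval :: "('a, 'b) monoid_scheme \<Rightarrow> ('l \<Rightarrow> 'a) \<Rightarrow> 'l fcomm \<Rightarrow> 'a" where
  "fc_eval G v (Ltr a) = v a"
| "fc_eval G v (Comm b c) = gcomm G (fc_eval G v b) (fc_eval G v c)"

fun xy_val :: "(nat \<Rightarrow> 'a) \<Rightarrow> (nat \<Rightarrow> 'a) \<Rightarrow> letter \<Rightarrow> 'a" where
  "xy_val x y (XL i) = x i"
| "xy_val x y (YL j) = y j"

definition xy_letters :: "nat \<Rightarrow> nat \<Rightarrow> letter set" where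
  "xy_letters m n = XL ` {..<m} \<union> YL ` {..<n}"

end

theory Submission
  imports Defs
begin

(*
  Conjugating a product of commutators by a letter z doubles it term by term, because
  z^-1 c z = c [c,z]. Expanding [x_1...x_m, y_1...y_n] with the identities
  [a, bc] = [a,c] c^-1[a,b]c  and  [ab, c] = b^-1[a,c]b [b,c]  and then resolving every
  conjugation in this way gives an exact product of left-normed commutators
  [x_i, y_j, z_1, ..., z_k]. Each base pair [x_i, y_j] occurs, and the appended letters z_l are
  pairwise distinct and different from x_i, y_j, which makes the terms pairwise distinct.
  The expansion is exact in every group.
*)

lemma glist_prod_Nil [simp]: "glist_prod G [] = \<one>\<^bsub>G\<^esub>"
  by (simp add: glist_prod_def)

lemma glist_prod_Cons [simp]: "glist_prod G (a # as) = a \<otimes>\<^bsub>G\<^esub> glist_prod G as"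
  by (simp add: glist_prod_def)

context group
begin

lemma glist_prod_closed: "set as \<subseteq> carrier G \<Longrightarrow> glist_prod G as \<in> carrier G"
  by (induction as) auto

lemma glist_prod_append:
  "set as \<subseteq> carrier G \<Longrightarrow> set bs \<subseteq> carrier G \<Longrightarrow>
     glist_prod G (as @ bs) = glist_prod G as \<otimes> glist_prod G bs"
  by (induction as) (auto simp: m_assoc glist_prod_closed)

lemma gcomm_closed [simp]: "a \<in> carrier G \<Longrightarrow> b \<in> carrier G \<Longrightarrow> gcomm G a b \<in> carrier G"
  by (simp add: gcomm_def)

lemma mult_inv_cancel_left [simp]: "a \<in> carrier G \<Longrightarrow> b \<in> carrier G \<Longrightarrow> a \<otimes> (inv a \<otimes> b) = b"
  by (simp add: m_assoc[symmetric])

lemma inv_mult_cancel_left [simp]: "a \<in> carrier G \<Longrightarrow> b \<in> carrier G \<Longrightarrow> inv a \<otimes> (a \<otimes> b) = b"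
  by (simp add: m_assoc[symmetric])

lemma conj_mult:
  "a \<in> carrier G \<Longrightarrow> b \<in> carrier G \<Longrightarrow> z \<in> carrier G \<Longrightarrow>
     inv z \<otimes> (a \<otimes> b) \<otimes> z = (inv z \<otimes> a \<otimes> z) \<otimes> (inv z \<otimes> b \<otimes> z)"
  by (simp add: m_assoc)

lemma conj_eq_mult_gcomm:
  "c \<in> carrier G \<Longrightarrow> z \<in> carrier G \<Longrightarrow> inv z \<otimes> c \<otimes> z = c \<otimes> gcomm G c z"
  by (simp add: gcomm_def m_assoc[symmetric])

lemma gcomm_mult_right:
  assumes "a \<in> carrier G" "b \<in> carrier G" "c \<in> carrier G"
  shows "gcomm G a (b \<otimes> c) = gcomm G a c \<otimes> (inv c \<otimes> gcomm G a b \<otimes> c)"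
  using assms by (simp add: gcomm_def m_assoc inv_mult_group)

lemma gcomm_mult_left:
  assumes "a \<in> carrier G" "b \<in> carrier G" "c \<in> carrier G"
  shows "gcomm G (a \<otimes> b) c = (inv b \<otimes> gcomm G a c \<otimes> b) \<otimes> gcomm G b c"
  using assms by (simp add: gcomm_def m_assoc inv_mult_group)

lemma fc_eval_closed: "range v \<subseteq> carrier G \<Longrightarrow> fc_eval G v e \<in> carrier G"
  by (induction e) auto

end

subsection \<open>Expanding a commutator of products\<close>

fun conj_expand :: "'l \<Rightarrow> 'l fcomm list \<Rightarrow> 'l fcomm list" where
  "conj_expand z [] = []"
| "conj_expand z (e # es) = e # Comm e (Ltr z) # conj_expand z es"

fun comm_expand_right :: "'l \<Rightarrow> 'l list \<Rightarrow> 'l fcomm list" where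
  "comm_expand_right x [] = []"
| "comm_expand_right x (y # ys) =
     comm_expand_right x ys @ fold conj_expand ys [Comm (Ltr x) (Ltr y)]"

fun comm_expand :: "'l list \<Rightarrow> 'l list \<Rightarrow> 'l fcomm list" where
  "comm_expand [] ys = []"
| "comm_expand (x # xs) ys = fold conj_expand xs (comm_expand_right x ys) @ comm_expand xs ys"

context group
begin

lemma prod_conj_expand:
  assumes v: "range v \<subseteq> carrier G"
  shows "glist_prod G (map (fc_eval G v) (conj_expand z es))
       = inv (v z) \<otimes> glist_prod G (map (fc_eval G v) es) \<otimes> v z"
proof (induction es)
  case Nil
  have "v z \<in> carrier G" using v by auto
  then show ?case by simp
next
  case (Cons e es)
  let ?c = "fc_eval G v e" and ?p = "glist_prod G (map (fc_eval G v) es)"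
  have carr: "v z \<in> carrier G" "?c \<in> carrier G" "?p \<in> carrier G"
    using v by (auto simp: image_subset_iff intro!: glist_prod_closed fc_eval_closed)
  have "inv (v z) \<otimes> (?c \<otimes> ?p) \<otimes> v z = ?c \<otimes> gcomm G ?c (v z) \<otimes> (inv (v z) \<otimes> ?p \<otimes> v z)"
    using carr by (simp only: conj_mult conj_eq_mult_gcomm[of ?c])
  with carr Cons.IH show ?case
    by (simp add: m_assoc)
qed

lemma prod_fold_conj_expand:
  assumes v: "range v \<subseteq> carrier G"
  shows "glist_prod G (map (fc_eval G v) (fold conj_expand zs es))
       = inv (glist_prod G (map v zs)) \<otimes> glist_prod G (map (fc_eval G v) es) \<otimes> glist_prod G (map v zs)"
proof (induction zs arbitrary: es)
  case Nil
  have "glist_prod G (map (fc_eval G v) es) \<in> carrier G"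
    using v by (auto simp: image_subset_iff intro!: glist_prod_closed fc_eval_closed)
  then show ?case by simp
next
  case (Cons z zs)
  have "glist_prod G (map (fc_eval G v) es) \<in> carrier G" "glist_prod G (map v zs) \<in> carrier G"
    "v z \<in> carrier G"
    using v by (auto simp: image_subset_iff intro!: glist_prod_closed fc_eval_closed)
  then show ?case
    by (simp add: Cons.IH prod_conj_expand[OF v] inv_mult_group m_assoc)
qed

lemma prod_comm_expand_right:
  assumes v: "range v \<subseteq> carrier G"
  shows "glist_prod G (map (fc_eval G v) (comm_expand_right x ys))
       = gcomm G (v x) (glist_prod G (map v ys))"
proof (induction ys)
  case Nil
  have "v x \<in> carrier G" using v by auto
  then show ?case by (simp add: gcomm_def m_assoc)
next
  case (Cons y ys)
  have "v x \<in> carrier G" "v y \<in> carrier G" "glist_prod G (map v ys) \<in> carrier G"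
    and evals: "\<And>es. set (map (fc_eval G v) es) \<subseteq> carrier G"
    using v by (auto simp: image_subset_iff intro!: glist_prod_closed fc_eval_closed)
  then show ?case
    by (simp add: glist_prod_append[OF evals evals] Cons.IH prod_fold_conj_expand[OF v]
        gcomm_mult_right)
qed

lemma prod_comm_expand:
  assumes v: "range v \<subseteq> carrier G"
  shows "glist_prod G (map (fc_eval G v) (comm_expand xs ys))
       = gcomm G (glist_prod G (map v xs)) (glist_prod G (map v ys))"
proof (induction xs)
  case Nil
  have "glist_prod G (map v ys) \<in> carrier G"
    using v by (auto simp: image_subset_iff intro!: glist_prod_closed)
  then show ?case by (simp add: gcomm_def m_assoc)
next
  case (Cons x xs)
  have "v x \<in> carrier G" "glist_prod G (map v xs) \<in> carrier G" "glist_prod G (map v ys) \<in> carrier G"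
    and evals: "\<And>es. set (map (fc_eval G v) es) \<subseteq> carrier G"
    using v by (auto simp: image_subset_iff intro!: glist_prod_closed fc_eval_closed)
  then show ?case
    by (simp add: glist_prod_append[OF evals evals] Cons.IH prod_fold_conj_expand[OF v]
        prod_comm_expand_right[OF v] gcomm_mult_left)
qed

end

subsection \<open>Shape of the terms\<close>

inductive left_normed :: "'l set \<Rightarrow> 'l set \<Rightarrow> 'l fcomm \<Rightarrow> bool" for A B where
  pair: "x \<in> A \<Longrightarrow> y \<in> B \<Longrightarrow> left_normed A B (Comm (Ltr x) (Ltr y))"
| extend: "left_normed A B e \<Longrightarrow> z \<in> A \<union> B \<Longrightarrow> left_normed A B (Comm e (Ltr z))"

lemma left_normed_mono:
  "left_normed A B e \<Longrightarrow> A \<subseteq> A' \<Longrightarrow> B \<subseteq> B' \<Longrightarrow> left_normed A' B' e"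
  by (induction rule: left_normed.induct) (auto intro: left_normed.intros)

lemma left_normed_args_subset: "left_normed A B e \<Longrightarrow> fc_args e \<subseteq> A \<union> B"
  by (induction rule: left_normed.induct) auto

lemma left_normed_args_meet: "left_normed A B e \<Longrightarrow> (\<exists>a\<in>A. a \<in> fc_args e) \<and> (\<exists>b\<in>B. b \<in> fc_args e)"
  by (induction rule: left_normed.induct) auto

lemma left_normed_pair_component:
  "left_normed A B e \<Longrightarrow> Comm (Ltr a) (Ltr b) \<in> fc_components e \<Longrightarrow> a \<in> A \<and> b \<in> B"
  by (induction rule: left_normed.induct) (auto elim: left_normed.cases)

lemma left_normed_weight:
  "left_normed A B e \<Longrightarrow> (\<exists>a\<in>A. \<exists>b\<in>B. e = Comm (Ltr a) (Ltr b)) \<or> 2 < fc_weight e"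
  by (induction rule: left_normed.induct) auto

lemma set_conj_expand: "set (conj_expand z es) = set es \<union> (\<lambda>e. Comm e (Ltr z)) ` set es"
  by (induction es) auto

lemma set_fold_conj_expand_supset: "set es \<subseteq> set (fold conj_expand zs es)"
proof (induction zs arbitrary: es)
  case (Cons z zs)
  have "set es \<subseteq> set (conj_expand z es)" by (simp add: set_conj_expand)
  with Cons.IH[of "conj_expand z es"] show ?case by simp
qed simp

lemma fold_conj_expand_invariant:
  assumes "\<forall>e\<in>set es. P e" and "\<And>e z. P e \<Longrightarrow> z \<in> set zs \<Longrightarrow> P (Comm e (Ltr z))"
  shows "\<forall>e\<in>set (fold conj_expand zs es). P e"
  using assms
proof (induction zs arbitrary: es)
  case (Cons z zs)
  then have "\<forall>e\<in>set (conj_expand z es). P e" by (auto simp: set_conj_expand)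
  with Cons show ?case by simp
qed simp

lemma fold_conj_expand_args:
  assumes "e \<in> set (fold conj_expand zs es)"
  shows "\<exists>e0\<in>set es. fc_args e0 \<subseteq> fc_args e \<and> fc_args e \<subseteq> fc_args e0 \<union> set zs"
  using fold_conj_expand_invariant
    [where P = "\<lambda>e. \<exists>e0\<in>set es. fc_args e0 \<subseteq> fc_args e \<and> fc_args e \<subseteq> fc_args e0 \<union> set zs"] assms
  by fastforce

lemma left_normed_comm_expand_right:
  "e \<in> set (comm_expand_right x ys) \<Longrightarrow> left_normed {x} (set ys) e"
proof (induction ys)
  case (Cons y ys)
  have "\<forall>e\<in>set (fold conj_expand ys [Comm (Ltr x) (Ltr y)]). left_normed {x} (set (y # ys)) e"
    by (rule fold_conj_expand_invariant) (auto intro: left_normed.intros)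
  with Cons show ?case by (auto elim: left_normed_mono)
qed simp

lemma left_normed_comm_expand: "e \<in> set (comm_expand xs ys) \<Longrightarrow> left_normed (set xs) (set ys) e"
proof (induction xs)
  case (Cons x xs)
  have "\<forall>e\<in>set (fold conj_expand xs (comm_expand_right x ys)). left_normed (set (x # xs)) (set ys) e"
    by (rule fold_conj_expand_invariant)
      (auto intro: left_normed.intros left_normed_mono[OF left_normed_comm_expand_right])
  with Cons show ?case by (auto elim: left_normed_mono)
qed simp

lemma pair_mem_comm_expand:
  "x \<in> set xs \<Longrightarrow> y \<in> set ys \<Longrightarrow> Comm (Ltr x) (Ltr y) \<in> set (comm_expand xs ys)"
proof -
  have "y \<in> set ys \<Longrightarrow> Comm (Ltr x) (Ltr y) \<in> set (comm_expand_right x ys)" for x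
    by (induction ys) (use set_fold_conj_expand_supset in force)+
  then show "x \<in> set xs \<Longrightarrow> y \<in> set ys \<Longrightarrow> ?thesis"
    by (induction xs) (use set_fold_conj_expand_supset in force)+
qed

subsection \<open>Distinctness\<close>

lemma distinct_conj_expand:
  "distinct es \<Longrightarrow> \<forall>e\<in>set es. z \<notin> fc_args e \<Longrightarrow> distinct (conj_expand z es)"
  by (induction es) (auto simp: set_conj_expand)

lemma distinct_fold_conj_expand:
  "distinct es \<Longrightarrow> distinct zs \<Longrightarrow> \<forall>e\<in>set es. fc_args e \<inter> set zs = {}
     \<Longrightarrow> distinct (fold conj_expand zs es)"
proof (induction zs arbitrary: es)
  case (Cons z zs)
  then have "distinct (conj_expand z es)"
    by (intro distinct_conj_expand) auto
  moreover have "\<forall>e\<in>set (conj_expand z es). fc_args e \<inter> set zs = {}"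
    using Cons.prems by (auto simp: set_conj_expand disjoint_iff)
  ultimately show ?case using Cons by simp
qed simp

lemma distinct_comm_expand_right:
  "distinct ys \<Longrightarrow> x \<notin> set ys \<Longrightarrow> distinct (comm_expand_right x ys)"
proof (induction ys)
  case (Cons y ys)
  let ?new = "fold conj_expand ys [Comm (Ltr x) (Ltr y)]"
  have "distinct ?new"
    using Cons.prems by (intro distinct_fold_conj_expand) auto
  moreover have "y \<in> fc_args e" if "e \<in> set ?new" for e
    using fold_conj_expand_args[OF that] by auto
  moreover have "fc_args e \<subseteq> insert x (set ys)" if "e \<in> set (comm_expand_right x ys)" for e
    using left_normed_args_subset[OF left_normed_comm_expand_right[OF that]] by auto
  ultimately show ?case
    using Cons by fastforce
qed simp

lemma distinct_comm_expand:
  "distinct xs \<Longrightarrow> distinct ys \<Longrightarrow> set xs \<inter> set ys = {} \<Longrightarrow> distinct (comm_expand xs ys)"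
proof (induction xs)
  case (Cons x xs)
  let ?new = "fold conj_expand xs (comm_expand_right x ys)"
  have right_args: "fc_args e \<subseteq> insert x (set ys)" "x \<in> fc_args e"
    if "e \<in> set (comm_expand_right x ys)" for e
    using left_normed_args_subset left_normed_args_meet left_normed_comm_expand_right[OF that]
    by fastforce+
  have "distinct ?new"
    using Cons.prems right_args(1)
    by (intro distinct_fold_conj_expand distinct_comm_expand_right) fastforce+
  moreover have "x \<in> fc_args e" if "e \<in> set ?new" for e
    using fold_conj_expand_args[OF that] right_args(2) by blast
  moreover have "fc_args e \<subseteq> set xs \<union> set ys" if "e \<in> set (comm_expand xs ys)" for e
    using left_normed_args_subset[OF left_normed_comm_expand[OF that]] .
  ultimately show ?case
    using Cons by fastforce
qed simp

lemma fc_eval_cong: "(\<And>l. l \<in> fc_args e \<Longrightarrow> v l = w l) \<Longrightarrow> fc_eval G v e = fc_eval G w e"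
  by (induction e) auto

lemma set_xy_lists:
  "set (map XL [0..<m]) = XL ` {..<m}" "set (map YL [0..<n]) = YL ` {..<n}"
  by auto

lemma left_normed_comm_expand_xy:
  "e \<in> set (comm_expand (map XL [0..<m]) (map YL [0..<n])) \<Longrightarrow>
     left_normed (XL ` {..<m}) (YL ` {..<n}) e"
  using left_normed_comm_expand by (fastforce simp flip: set_xy_lists)

lemma (in group) prod_comm_expand_xy:
  assumes "\<And>i. i < m \<Longrightarrow> x i \<in> carrier G" and "\<And>j. j < n \<Longrightarrow> y j \<in> carrier G"
  shows "gcomm G (glist_prod G (map x [0..<m])) (glist_prod G (map y [0..<n]))
       = glist_prod G (map (fc_eval G (xy_val x y)) (comm_expand (map XL [0..<m]) (map YL [0..<n])))"
proof -
  let ?etas = "comm_expand (map XL [0..<m]) (map YL [0..<n])"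
  \<comment> \<open>x i and y j need not lie in G for i \<ge> m or j \<ge> n\<close>
  define v where "v l = (if l \<in> xy_letters m n then xy_val x y l else \<one>)" for l
  have v: "range v \<subseteq> carrier G"
    using assms by (auto simp: v_def xy_letters_def)
  have "map x [0..<m] = map v (map XL [0..<m])" "map y [0..<n] = map v (map YL [0..<n])"
    by (auto simp: v_def xy_letters_def)
  moreover have "map (fc_eval G (xy_val x y)) ?etas = map (fc_eval G v) ?etas"
  proof (rule map_cong[OF refl], rule fc_eval_cong)
    fix e l assume "e \<in> set ?etas" "l \<in> fc_args e"
    with left_normed_args_subset[OF left_normed_comm_expand_xy] show "xy_val x y l = v l"
      by (force simp: v_def xy_letters_def)
  qed
  ultimately show ?thesis
    by (simp only: prod_comm_expand[OF v])
qed

theorem lemmaB5: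
  fixes G :: "('a, 'b) monoid_scheme" and m n :: nat and x y :: "nat \<Rightarrow> 'a"
  assumes "nilpotent_group G"
    and "\<And>i. i < m \<Longrightarrow> x i \<in> carrier G"
    and "\<And>j. j < n \<Longrightarrow> y j \<in> carrier G"
  shows "\<exists>etas :: letter fcomm list.
     (\<forall>e\<in>set etas. fc_args e \<subseteq> xy_letters m n)
   \<and> gcomm G (glist_prod G (map x [0..<m])) (glist_prod G (map y [0..<n]))
       = glist_prod G (map (fc_eval G (xy_val x y)) etas)
   \<and> (\<forall>i<m. \<forall>j<n. Comm (Ltr (XL i)) (Ltr (YL j)) \<in> set etas)
   \<and> (\<forall>e\<in>set etas. (\<exists>i. XL i \<in> fc_args e) \<and> (\<exists>j. YL j \<in> fc_args e))
   \<and> distinct etas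
   \<and> (\<forall>e\<in>set etas. \<forall>i i'. Comm (Ltr (XL i)) (Ltr (XL i')) \<notin> fc_components e
                        \<and> Comm (Ltr (YL i)) (Ltr (YL i')) \<notin> fc_components e)
   \<and> (\<forall>e\<in>set etas. (\<nexists>i j. e = Comm (Ltr (XL i)) (Ltr (YL j))) \<longrightarrow> fc_weight e > 2)"
proof (rule exI, intro conjI ballI allI impI)
  let ?etas = "comm_expand (map XL [0..<m]) (map YL [0..<n])"
  have "group G" using assms(1) by (simp add: nilpotent_group_def)
  then show "gcomm G (glist_prod G (map x [0..<m])) (glist_prod G (map y [0..<n]))
       = glist_prod G (map (fc_eval G (xy_val x y)) ?etas)"
    using assms(2,3) by (rule group.prod_comm_expand_xy)
  show "distinct ?etas"
    by (rule distinct_comm_expand) (auto simp: distinct_map inj_on_def)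
  show "Comm (Ltr (XL i)) (Ltr (YL j)) \<in> set ?etas" if "i < m" "j < n" for i j
    using that by (intro pair_mem_comm_expand) auto
  fix e assume "e \<in> set ?etas"
  then have e: "left_normed (XL ` {..<m}) (YL ` {..<n}) e"
    by (rule left_normed_comm_expand_xy)
  show "fc_args e \<subseteq> xy_letters m n"
    using left_normed_args_subset[OF e] by (simp add: xy_letters_def)
  show "\<exists>i. XL i \<in> fc_args e" "\<exists>j. YL j \<in> fc_args e"
    using left_normed_args_meet[OF e] by auto
  show "Comm (Ltr (XL i)) (Ltr (XL i')) \<notin> fc_components e"
    and "Comm (Ltr (YL i)) (Ltr (YL i')) \<notin> fc_components e" for i i'
    using left_normed_pair_component[OF e] by auto
  show "\<nexists>i j. e = Comm (Ltr (XL i)) (Ltr (YL j)) \<Longrightarrow> 2 < fc_weight e"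
    using left_normed_weight[OF e] by auto
qed

end
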